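(* Let $\mathcal N$ be a ReLU net with input dimension $d$, a single hidden layer of width $n$ and output dimension $1$, i.e. $f_{\mathcal N}(x)=\mathrm{ReLU}\big(b+\sum_{j=1}^n c_j\,\mathrm{ReLU}(A_j(x))\big)$ with $A_j:\mathbb{R}^d\to\mathbb{R}$ affine and $b,c_j\in\mathbb{R}$. Then there exists another ReLU net $\widetilde{\mathcal N}$ with input dimension $d$, output dimension $1$ and $n+2$ hidden layers, each of width $d+2$, that computes the same function as $\mathcal N$ on $[0,1]^d$.
   Context: For $m\geq1$, $\mathrm{ReLU}(x_1,\dots,x_m)=(\max\{0,x_1\},\dots,\max\{0,x_m\})$. A feed-forward ReLU net with input dimension $d_{\mathrm{in}}$, hidden layer width $w$, depth $n$ and output dimension $d_{\mathrm{out}}$ is a function of the form $\mathrm{ReLU}\circ A_n\circ\mathrm{ReLU}\circ A_{n-1}\circ\cdots\circ\mathrm{ReLU}\circ A_1$ with $A_1:\mathbb{R}^{d_{\mathrm{in}}}\to\mathbb{R}^w$, $A_j:\mathbb{R}^w\to\mathbb{R}^w$ ($2\leq j\leq n-1$), $A_n:\mathbb{R}^w\to\mathbb{R}^{d_{\mathrm{out}}}$ affine. Throughout, functions computed by nets are considered on the domain $[0,1]^d$. *)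

theory Defs
  imports Main "HOL-Analysis.Analysis"
begin

text \<open>Vectors in R^m are represented as functions nat => real; only the
  coordinates i < m are meaningful (the others are kept at 0 by the maps below).\<close>

type_synonym vec = "nat \<Rightarrow> real"

type_synonym layer = "(nat \<Rightarrow> nat \<Rightarrow> real) \<times> (nat \<Rightarrow> real)"

definition affine_map :: "nat \<Rightarrow> nat \<Rightarrow> layer \<Rightarrow> vec \<Rightarrow> vec" where
  "affine_map m k L x = (\<lambda>i. if i < k then snd L i + (\<Sum>j<m. fst L i j * x j) else 0)"

definition relu_vec :: "nat \<Rightarrow> vec \<Rightarrow> vec" where
  "relu_vec k v = (\<lambda>i. if i < k then max 0 (v i) else 0)"

fun eval_layers :: "nat list \<Rightarrow> layer list \<Rightarrow> vec \<Rightarrow> vec" where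
  "eval_layers (m # k # ds) (L # Ls) x = eval_layers (k # ds) Ls (relu_vec k (affine_map m k L x))"
| "eval_layers _ _ x = x"

text \<open>Dimensions of a net with input dimension din, hidden width w, depth n (n affine maps,
  hence n-1 hidden layers) and output dimension dout.\<close>
definition net_dims :: "nat \<Rightarrow> nat \<Rightarrow> nat \<Rightarrow> nat \<Rightarrow> nat list" where
  "net_dims din w n dout = din # replicate (n - 1) w @ [dout]"

definition is_relu_net :: "nat \<Rightarrow> nat \<Rightarrow> nat \<Rightarrow> nat \<Rightarrow> layer list \<Rightarrow> bool" where
  "is_relu_net din w n dout Ls \<longleftrightarrow> n \<ge> 1 \<and> length Ls = n"

definition net_fun :: "nat \<Rightarrow> nat \<Rightarrow> nat \<Rightarrow> nat \<Rightarrow> layer list \<Rightarrow> vec \<Rightarrow> vec" where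
  "net_fun din w n dout Ls = eval_layers (net_dims din w n dout) Ls"

definition unit_cube :: "nat \<Rightarrow> vec set" where
  "unit_cube d = {x. \<forall>i<d. 0 \<le> x i \<and> x i \<le> 1}"

end

theory Submission
  imports Defs
begin

text \<open>The deep net keeps three things in its d + 2 neurons: a copy of the input x (ReLU acts
  as the identity on it since x \<ge> 0 on the cube), the value ReLU(A_k(x)) of the current
  hidden unit of the shallow net, and the partial output
  b + c_0 ReLU(A_0(x)) + ... + c_(k-1) ReLU(A_(k-1)(x)) shifted by a constant C. Choosing C at
  least the absolute value of every partial output on the cube keeps the shifted accumulator
  nonnegative, so the ReLUs never cut it; the output layer subtracts C again before the final
  ReLU.\<close>

lemma eval_layers_square_block:
  "eval_layers (k # replicate (length Ls) k @ ds) (Ls @ Ls') x =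
   eval_layers (k # ds) Ls' (foldl (\<lambda>v L. relu_vec k (affine_map k k L v)) x Ls)"
  by (induction Ls arbitrary: x) simp_all

lemma sum_unit_weight:
  fixes v :: "nat \<Rightarrow> real"
  assumes "i < m"
  shows "(\<Sum>j<m. (if j = i then 1 else 0) * v j) = v i"
proof -
  have "(\<Sum>j<m. (if j = i then 1 else 0) * v j) = (\<Sum>j<m. if j = i then v j else 0)"
    by (rule sum.cong) auto
  also have "\<dots> = v i"
    using assms by (simp add: sum.delta)
  finally show ?thesis .
qed

definition preact :: "nat \<Rightarrow> layer \<Rightarrow> nat \<Rightarrow> vec \<Rightarrow> real" where
  "preact d L k x = snd L k + (\<Sum>i<d. fst L k i * x i)"

definition preact_bound :: "nat \<Rightarrow> layer \<Rightarrow> nat \<Rightarrow> real" where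
  "preact_bound d L k = \<bar>snd L k\<bar> + (\<Sum>i<d. \<bar>fst L k i\<bar>)"

lemma preact_abs_le:
  assumes "x \<in> unit_cube d"
  shows "\<bar>preact d L k x\<bar> \<le> preact_bound d L k"
proof -
  have "\<bar>\<Sum>i<d. fst L k i * x i\<bar> \<le> (\<Sum>i<d. \<bar>fst L k i * x i\<bar>)"
    by (rule sum_abs)
  also have "\<dots> \<le> (\<Sum>i<d. \<bar>fst L k i\<bar>)"
  proof (rule sum_mono)
    fix i assume "i \<in> {..<d}"
    then have "0 \<le> x i" "x i \<le> 1"
      using assms by (auto simp: unit_cube_def)
    then show "\<bar>fst L k i * x i\<bar> \<le> \<bar>fst L k i\<bar>"
      by (simp add: abs_mult mult_left_le)
  qed
  finally show ?thesis
    unfolding preact_def preact_bound_def by linarith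
qed

text \<open>The weights c_j, padded by zeros beyond the width n: the carry layer with index n, needed
  only to reach depth n + 3, then leaves the accumulator unchanged.\<close>
definition out_weight :: "nat \<Rightarrow> layer \<Rightarrow> nat \<Rightarrow> real" where
  "out_weight n L k = (if k < n then fst L 0 k else 0)"

definition partial_output :: "nat \<Rightarrow> nat \<Rightarrow> layer \<Rightarrow> layer \<Rightarrow> nat \<Rightarrow> vec \<Rightarrow> real" where
  "partial_output d n L1 L2 k x =
     snd L2 0 + (\<Sum>j<k. out_weight n L2 j * max 0 (preact d L1 j x))"

definition output_shift :: "nat \<Rightarrow> nat \<Rightarrow> layer \<Rightarrow> layer \<Rightarrow> real" where
  "output_shift d n L1 L2 = \<bar>snd L2 0\<bar> + (\<Sum>j<n. \<bar>out_weight n L2 j\<bar> * preact_bound d L1 j)"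

lemma partial_output_abs_le:
  assumes "x \<in> unit_cube d"
  shows "\<bar>partial_output d n L1 L2 k x\<bar> \<le> output_shift d n L1 L2"
proof -
  let ?t = "\<lambda>j. out_weight n L2 j * max 0 (preact d L1 j x)"
  let ?B = "\<lambda>j. \<bar>out_weight n L2 j\<bar> * preact_bound d L1 j"
  have "\<bar>\<Sum>j<k. ?t j\<bar> \<le> (\<Sum>j<k. ?B j)"
  proof (rule order_trans[OF sum_abs sum_mono])
    fix j
    have "\<bar>max 0 (preact d L1 j x)\<bar> \<le> preact_bound d L1 j"
      using preact_abs_le[OF assms, of L1 j] by (simp add: abs_le_iff max_def)
    then show "\<bar>?t j\<bar> \<le> ?B j"
      by (simp add: abs_mult mult_left_mono)
  qed
  also have "\<dots> = (\<Sum>j\<in>{..<k} \<inter> {..<n}. ?B j)"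
    by (rule sum.mono_neutral_right) (auto simp: out_weight_def)
  also have "\<dots> \<le> (\<Sum>j<n. ?B j)"
    by (rule sum_mono2) (auto simp: preact_bound_def sum_nonneg)
  finally show ?thesis
    unfolding partial_output_def output_shift_def by linarith
qed

definition carry_state :: "nat \<Rightarrow> nat \<Rightarrow> layer \<Rightarrow> layer \<Rightarrow> real \<Rightarrow> nat \<Rightarrow> vec \<Rightarrow> vec" where
  "carry_state d n L1 L2 C k x = (\<lambda>i.
     if i < d then x i
     else if i = d then max 0 (preact d L1 k x)
     else if i = Suc d then C + partial_output d n L1 L2 k x
     else 0)"

definition input_layer :: "nat \<Rightarrow> layer \<Rightarrow> layer \<Rightarrow> real \<Rightarrow> layer" where
  "input_layer d L1 L2 C =
     ((\<lambda>i j. if i < d then (if j = i then 1 else 0) else if i = d then fst L1 0 j else 0),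
      (\<lambda>i. if i < d then 0 else if i = d then snd L1 0 else C + snd L2 0))"

definition carry_layer :: "nat \<Rightarrow> nat \<Rightarrow> layer \<Rightarrow> layer \<Rightarrow> nat \<Rightarrow> layer" where
  "carry_layer d n L1 L2 k =
     ((\<lambda>i j. if i < d then (if j = i then 1 else 0)
        else if i = d then (if j < d then fst L1 (Suc k) j else 0)
        else if j = Suc d then 1 else if j = d then out_weight n L2 k else 0),
      (\<lambda>i. if i = d then snd L1 (Suc k) else 0))"

definition output_layer :: "nat \<Rightarrow> real \<Rightarrow> layer" where
  "output_layer d C = ((\<lambda>i j. if j = Suc d then 1 else 0), (\<lambda>i. - C))"

lemma relu_input_layer:
  assumes "\<forall>i<d. 0 \<le> x i" and "0 \<le> C + partial_output d n L1 L2 0 x"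
  shows "relu_vec (d + 2) (affine_map d (d + 2) (input_layer d L1 L2 C) x) =
         carry_state d n L1 L2 C 0 x"
proof
  fix i
  show "relu_vec (d + 2) (affine_map d (d + 2) (input_layer d L1 L2 C) x) i =
        carry_state d n L1 L2 C 0 x i"
    using assms
    by (cases "i < d")
       (auto simp: relu_vec_def affine_map_def input_layer_def carry_state_def
                   preact_def partial_output_def sum_unit_weight)
qed

lemma relu_carry_layer:
  assumes "\<forall>i<d. 0 \<le> x i" and "0 \<le> C + partial_output d n L1 L2 (Suc k) x"
  shows "relu_vec (d + 2) (affine_map (d + 2) (d + 2) (carry_layer d n L1 L2 k)
           (carry_state d n L1 L2 C k x)) = carry_state d n L1 L2 C (Suc k) x"
proof
  fix i
  let ?s = "carry_state d n L1 L2 C k x"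
  have dims: "d + 2 = Suc (Suc d)"
    by simp
  have copy: "(\<Sum>j<d + 2. (if j = i then 1 else 0) * ?s j) = ?s i" if "i < d"
    using that by (intro sum_unit_weight) simp
  have hidden: "(\<Sum>j<d + 2. (if j < d then fst L1 (Suc k) j else 0) * ?s j) =
                (\<Sum>j<d. fst L1 (Suc k) j * x j)"
    unfolding dims by (simp add: carry_state_def)
  have accumulate:
    "(\<Sum>j<d + 2. (if j = Suc d then 1 else if j = d then out_weight n L2 k else 0) * ?s j) =
     ?s (Suc d) + out_weight n L2 k * ?s d"
    unfolding dims by (simp add: carry_state_def)
  show "relu_vec (d + 2) (affine_map (d + 2) (d + 2) (carry_layer d n L1 L2 k) ?s) i =
        carry_state d n L1 L2 C (Suc k) x i"
    using assms copy hidden accumulate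
    by (auto simp: relu_vec_def affine_map_def carry_layer_def carry_state_def
                   preact_def partial_output_def algebra_simps)
qed

lemma relu_carry_layers:
  assumes "\<forall>i<d. 0 \<le> x i" and "\<forall>k. 0 \<le> C + partial_output d n L1 L2 k x"
  shows "foldl (\<lambda>v L. relu_vec (d + 2) (affine_map (d + 2) (d + 2) L v))
           (carry_state d n L1 L2 C 0 x) (map (carry_layer d n L1 L2) [0..<r]) =
         carry_state d n L1 L2 C r x"
proof (induction r)
  case (Suc r)
  then show ?case
    using relu_carry_layer[OF assms(1) assms(2)[rule_format, of "Suc r"]] by simp
qed simp

lemma relu_output_layer:
  "relu_vec 1 (affine_map (d + 2) 1 (output_layer d C) (carry_state d n L1 L2 C k x)) =
   (\<lambda>i. if i < 1 then max 0 (partial_output d n L1 L2 k x) else 0)"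
proof -
  have "(\<Sum>j<d + 2. (if j = Suc d then 1 else 0) * carry_state d n L1 L2 C k x j) =
        C + partial_output d n L1 L2 k x"
    by (subst sum_unit_weight) (simp_all add: carry_state_def)
  then show ?thesis
    by (auto simp: relu_vec_def affine_map_def output_layer_def)
qed

lemma net_fun_shallow:
  "net_fun d n 2 1 [L1, L2] x = (\<lambda>i. if i < 1 then max 0 (partial_output d n L1 L2 n x) else 0)"
proof -
  have "(\<Sum>j<n. fst L2 0 j * relu_vec n (affine_map d n L1 x) j) =
        (\<Sum>j<n. out_weight n L2 j * max 0 (preact d L1 j x))"
    by (rule sum.cong) (auto simp: relu_vec_def affine_map_def preact_def out_weight_def)
  then show ?thesis
    by (auto simp: net_fun_def net_dims_def numeral_2_eq_2 relu_vec_def affine_map_def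
                   partial_output_def)
qed

theorem lemma3:
  fixes d n :: nat and N :: "layer list"
  assumes "is_relu_net d n 2 1 N"
  shows "\<exists>N'. is_relu_net d (d + 2) (n + 3) 1 N' \<and>
           (\<forall>x \<in> unit_cube d. net_fun d (d + 2) (n + 3) 1 N' x = net_fun d n 2 1 N x)"
proof -
  obtain L1 L2 where N: "N = [L1, L2]"
    using assms by (auto simp: is_relu_net_def numeral_2_eq_2 length_Suc_conv)
  define C where "C = output_shift d n L1 L2"
  define Ms where "Ms = map (carry_layer d n L1 L2) [0..<Suc n]"
  define N' where "N' = input_layer d L1 L2 C # Ms @ [output_layer d C]"
  have "net_fun d (d + 2) (n + 3) 1 N' x = net_fun d n 2 1 N x" if x: "x \<in> unit_cube d" for x
  proof -
    have nonneg: "\<forall>i<d. 0 \<le> x i"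
      using x by (simp add: unit_cube_def)
    have shifted: "\<forall>k. 0 \<le> C + partial_output d n L1 L2 k x"
    proof
      fix k
      show "0 \<le> C + partial_output d n L1 L2 k x"
        using partial_output_abs_le[OF x, of n L1 L2 k] unfolding C_def by linarith
    qed
    have dims: "net_dims d (d + 2) (n + 3) 1 = d # (d + 2) # replicate (length Ms) (d + 2) @ [1]"
      by (simp add: net_dims_def Ms_def numeral_3_eq_3)
    have "net_fun d (d + 2) (n + 3) 1 N' x =
          eval_layers ((d + 2) # replicate (length Ms) (d + 2) @ [1]) (Ms @ [output_layer d C])
            (carry_state d n L1 L2 C 0 x)"
      unfolding net_fun_def dims N'_def eval_layers.simps(1)
      by (simp only: relu_input_layer[OF nonneg shifted[rule_format]])
    also have "\<dots> = eval_layers [d + 2, 1] [output_layer d C] (carry_state d n L1 L2 C (Suc n) x)"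
      unfolding eval_layers_square_block Ms_def relu_carry_layers[OF nonneg shifted] by simp
    also have "\<dots> = (\<lambda>i. if i < 1 then max 0 (partial_output d n L1 L2 (Suc n) x) else 0)"
      using relu_output_layer by simp
    also have "partial_output d n L1 L2 (Suc n) x = partial_output d n L1 L2 n x"
      by (simp add: partial_output_def out_weight_def)
    finally show ?thesis
      unfolding N net_fun_shallow .
  qed
  moreover have "is_relu_net d (d + 2) (n + 3) 1 N'"
    by (simp add: is_relu_net_def N'_def Ms_def)
  ultimately show ?thesis
    by blast
qed

end
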